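(* Let $M$ be a finite cyclic group, let $s,t\in M$ and let $d>1$ be an integer. Then there are integers $k,l$ with $s^k=t^l$ such that $d$ does not divide both $k$ and $l$. *)

theory Defs
  imports "HOL-Algebra.Elementary_Groups"
begin

end

theory Submission
  imports Defs
begin

text \<open>Write \<open>s = g\<^sup>a\<close> and \<open>t = g\<^sup>b\<close> for a generator \<open>g\<close>. Cancelling \<open>c = gcd a b\<close> gives
  coprime exponents \<open>k = b / c\<close> and \<open>l = a / c\<close> with \<open>ak = bl\<close>, hence \<open>s\<^sup>k = t\<^sup>l\<close>; and no
  \<open>d > 1\<close> divides two coprime integers.\<close>

lemma exists_coprime_cross_mult:
  fixes a b :: "'a :: semiring_gcd"
  shows "\<exists>k l. coprime k l \<and> a * k = b * l"
proof (cases "a = 0 \<and> b = 0")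
  case True
  then show ?thesis by (intro exI[of _ 1]) simp
next
  case False
  have "a * (b div gcd a b) = b * (a div gcd a b)"
    by (simp add: div_mult_swap mult.commute)
  then show ?thesis
    using div_gcd_coprime[of a b] False by (metis coprime_commute)
qed

lemma (in group) cyclic_group_pow_coprime:
  assumes "cyclic_group G" and "s \<in> carrier G" and "t \<in> carrier G"
  shows "\<exists>k l :: int. coprime k l \<and> s [^] k = t [^] l"
proof -
  obtain g where g: "g \<in> carrier G" "carrier G = range (\<lambda>n::int. g [^] n)"
    using assms(1) cyclic_group by blast
  obtain a b :: int where s: "s = g [^] a" and t: "t = g [^] b"
    using assms(2,3) g by blast
  obtain k l :: int where "coprime k l" and "a * k = b * l"
    using exists_coprime_cross_mult by blast
  moreover have "s [^] k = g [^] (a * k)" "t [^] l = g [^] (b * l)"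
    using s t g(1) by (simp_all add: int_pow_pow)
  ultimately show ?thesis by metis
qed

lemma coprime_not_common_dvd:
  fixes k l d :: int
  assumes "coprime k l" and "d > 1"
  shows "\<not> (d dvd k \<and> d dvd l)"
  using assms coprime_common_divisor_int by fastforce

theorem lemma4p2:
  fixes M (structure) and s t :: 'a and d :: int
  assumes "group M" and "cyclic_group M" and "finite (carrier M)"
    and "s \<in> carrier M" and "t \<in> carrier M" and "d > 1"
  shows "\<exists>k l :: int. s [^]\<^bsub>M\<^esub> k = t [^]\<^bsub>M\<^esub> l \<and> \<not> (d dvd k \<and> d dvd l)"
proof -
  obtain k l :: int where "coprime k l" "s [^] k = t [^] l"
    using group.cyclic_group_pow_coprime[OF assms(1,2,4,5)] by blast
  then show ?thesis
    using coprime_not_common_dvd[OF _ assms(6)] by blast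
qed

end
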